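(* Let $d\geq 2$ and let $\mathcal K$ be the class of all compact convex subsets of $\mathbb R^d$ with positive Lebesgue measure. For every $n\geq 1$, $$\mathcal R_n(\mathcal K):=\inf_{\hat G_n}\sup_{K\in\mathcal K}\mathbb E_K\big[|K\triangle\hat G_n|\big]=+\infty,$$ where the infimum is over all set estimators $\hat G_n$ based on a sample $X_1,\ldots,X_n$.
   Context: $|\cdot|$ is Lebesgue measure, $\triangle$ symmetric difference, and $\mathbb E_K$ is expectation when $X_1,\ldots,X_n$ are i.i.d. uniform on $K$. *)

theory Defs
  imports "HOL-Probability.Probability"
begin

definition convex_bodies :: "(real^'d) set set" where
  "convex_bodies = {K. compact K \<and> convex K \<and> emeasure lborel K > 0}"

definition sample_law :: "nat \<Rightarrow> (real^'d) set \<Rightarrow> (nat \<Rightarrow> real^'d) measure" where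
  "sample_law n K = PiM {..<n} (\<lambda>_. uniform_measure lborel K)"

text \<open>Set estimators based on n sample points: maps from samples to subsets of R^d
  whose graph is jointly Borel measurable (so that the risk is well defined).\<close>
definition set_estimators :: "nat \<Rightarrow> ((nat \<Rightarrow> real^'d) \<Rightarrow> (real^'d) set) set" where
  "set_estimators n = {G. {p. snd p \<in> G (fst p)} \<inter> space (PiM {..<n} (\<lambda>_. lborel) \<Otimes>\<^sub>M lborel)
       \<in> sets (PiM {..<n} (\<lambda>_. (lborel :: (real^'d) measure)) \<Otimes>\<^sub>M (lborel :: (real^'d) measure))}"

definition risk :: "nat \<Rightarrow> (real^'d) set \<Rightarrow> ((nat \<Rightarrow> real^'d) \<Rightarrow> (real^'d) set) \<Rightarrow> ennreal" where
  "risk n K G = (\<integral>\<^sup>+ x. emeasure lborel ((K - G x) \<union> (G x - K)) \<partial>sample_law n K)"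

end

theory Submission
  imports Defs
begin

text \<open>
  A sample of \<open>n\<close> points from \<open>K\<^sub>2\<close> falls into \<open>K\<^sub>1 \<subseteq> K\<^sub>2\<close> with probability
  \<open>c = (|K\<^sub>1| / |K\<^sub>2|)\<^sup>n\<close>, and conditioned on that event it is a sample from \<open>K\<^sub>1\<close>.
  Hence \<open>c * E\<^sub>K\<^sub>1 f \<le> E\<^sub>K\<^sub>2 f\<close> for every nonnegative \<open>f\<close>; combined with
  \<open>|K\<^sub>2 - K\<^sub>1| \<le> |K\<^sub>1 \<triangle> G| + |K\<^sub>2 \<triangle> G|\<close> this gives
  \<open>c * |K\<^sub>2 - K\<^sub>1| \<le> (c + 1) * sup\<^sub>K E\<^sub>K |K \<triangle> G|\<close> for every estimator.
  For the cubes \<open>[0,t]\<^sup>d \<subseteq> [0,2t]\<^sup>d\<close> the ratio \<open>c = 2\<^sup>-\<^sup>d\<^sup>n\<close> does not depend on \<open>t\<close>,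
  while \<open>|K\<^sub>2 - K\<^sub>1|\<close> grows like \<open>t\<^sup>d\<close>.
\<close>

lemma ennreal_eq_top_if_dominates_powers:
  fixes c :: real and D :: nat
  assumes "0 < c" "0 < D" and bound: "\<And>t. 1 \<le> t \<Longrightarrow> ennreal (c * t ^ D) \<le> x"
  shows "x = \<infinity>"
proof (cases x)
  case (real s)
  define t where "t = max 1 (s / c + 1)"
  have "s < c * t"
    using \<open>0 < c\<close> by (simp add: t_def field_simps max_def)
  also have "\<dots> \<le> c * t ^ D"
    using \<open>0 < c\<close> \<open>0 < D\<close> by (intro mult_left_mono self_le_power) (simp_all add: t_def)
  finally have "s < c * t ^ D" .
  moreover have "ennreal (c * t ^ D) \<le> ennreal s"
    using bound[of t] real by (simp add: t_def)
  ultimately show ?thesis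
    using real by (simp add: ennreal_le_iff2)
qed (simp add: infinity_ennreal_def)

lemma nn_integral_uniform_measure_le:
  assumes f: "f \<in> borel_measurable M" and E: "E \<in> sets M" and fin: "emeasure M E \<noteq> \<infinity>"
  shows "emeasure M E * (\<integral>\<^sup>+x. f x \<partial>uniform_measure M E) \<le> (\<integral>\<^sup>+x. f x \<partial>M)"
proof -
  have "emeasure M E * (\<integral>\<^sup>+x. f x \<partial>uniform_measure M E)
      = emeasure M E * ((\<integral>\<^sup>+x. f x * indicator E x \<partial>M) / emeasure M E)"
    by (simp add: nn_integral_uniform_measure[OF f E])
  also have "\<dots> \<le> (\<integral>\<^sup>+x. f x * indicator E x \<partial>M)"
    using fin by (cases "emeasure M E = 0")
      (simp_all add: ennreal_times_divide mult.commute[of "emeasure M E"] ennreal_mult_divide_eq)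
  also have "\<dots> \<le> (\<integral>\<^sup>+x. f x \<partial>M)"
    by (intro nn_integral_mono) (simp split: split_indicator)
  finally show ?thesis .
qed

lemma uniform_measure_uniform_measure:
  assumes K: "K1 \<subseteq> K2" "K1 \<in> sets M" "K2 \<in> sets M"
    and pos: "emeasure M K1 \<noteq> 0" and fin: "emeasure M K2 \<noteq> \<infinity>"
  shows "uniform_measure (uniform_measure M K2) K1 = uniform_measure M K1"
proof (rule measure_eqI)
  have cancel: "a / b / (c / b) = a / c" if "b \<noteq> 0" "b \<noteq> \<infinity>" "c \<noteq> 0" for a b c :: ennreal
    using that by (smt (verit, best) divide_mult_eq ennreal_divide_eq_0_iff
        ennreal_divide_eq_top_iff ennreal_divide_times infinity_ennreal_def)
  fix A assume "A \<in> sets (uniform_measure (uniform_measure M K2) K1)"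
  then have A: "A \<in> sets M" by simp
  have "emeasure M K1 \<le> emeasure M K2" using K by (intro emeasure_mono) auto
  then have "emeasure M K2 \<noteq> 0" using pos by auto
  moreover have "K2 \<inter> (K1 \<inter> A) = K1 \<inter> A" "K2 \<inter> K1 = K1" using K by auto
  ultimately show "emeasure (uniform_measure (uniform_measure M K2) K1) A
      = emeasure (uniform_measure M K1) A"
    using A K pos fin by (simp add: cancel)
qed simp

lemma uniform_measure_PiM_PiE:
  assumes I: "finite I" and "prob_space N" and A: "A \<in> sets N" "emeasure N A \<noteq> 0"
  shows "uniform_measure (PiM I (\<lambda>_. N)) (Pi\<^sub>E I (\<lambda>_. A)) = PiM I (\<lambda>_. uniform_measure N A)"
proof -
  interpret N: product_prob_space "\<lambda>_. N"
    by (simp add: product_prob_space_def product_prob_space_axioms_def product_sigma_finite_def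
        \<open>prob_space N\<close> prob_space_imp_sigma_finite)
  have "prob_space (uniform_measure N A)"
    using A by (intro prob_space_uniform_measure) (simp_all add: N.emeasure_finite)
  then interpret U: product_prob_space "\<lambda>_. uniform_measure N A"
    by (simp add: product_prob_space_def product_prob_space_axioms_def product_sigma_finite_def
        prob_space_imp_sigma_finite)
  show ?thesis
  proof (rule U.PiM_eqI[OF I])
    fix B assume "\<And>i. i \<in> I \<Longrightarrow> B i \<in> sets (uniform_measure N A)"
    then have B: "\<And>i. i \<in> I \<Longrightarrow> B i \<in> sets N" by simp
    have box: "Pi\<^sub>E I (\<lambda>_. A) \<inter> Pi\<^sub>E I B = Pi\<^sub>E I (\<lambda>i. A \<inter> B i)" by (rule PiE_Int)
    have "emeasure (uniform_measure (PiM I (\<lambda>_. N)) (Pi\<^sub>E I (\<lambda>_. A))) (Pi\<^sub>E I B)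
        = (\<Prod>i\<in>I. emeasure N (A \<inter> B i)) / emeasure N A ^ card I"
      using I A B by (simp add: sets_PiM_I_finite box N.emeasure_PiM prod_constant)
    also have "\<dots> = (\<Prod>i\<in>I. emeasure N (A \<inter> B i) / emeasure N A)"
      unfolding divide_ennreal_def ennreal_inverse_power prod.distrib prod_constant ..
    also have "\<dots> = (\<Prod>i\<in>I. emeasure (uniform_measure N A) (B i))"
      using A B by simp
    finally show "emeasure (uniform_measure (PiM I (\<lambda>_. N)) (Pi\<^sub>E I (\<lambda>_. A))) (Pi\<^sub>E I B)
        = (\<Prod>i\<in>I. emeasure (uniform_measure N A) (B i))" .
  qed (simp only: sets_uniform_measure; rule sets_PiM_cong; simp)
qed

lemma nn_integral_PiM_uniform_measure_subset:
  assumes I: "finite I" and K: "K1 \<subseteq> K2" "K1 \<in> sets M" "K2 \<in> sets M"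
    and pos: "emeasure M K1 \<noteq> 0" and fin: "emeasure M K2 \<noteq> \<infinity>"
    and f: "f \<in> borel_measurable (PiM I (\<lambda>_. M))"
  shows "(emeasure M K1 / emeasure M K2) ^ card I
           * (\<integral>\<^sup>+x. f x \<partial>PiM I (\<lambda>_. uniform_measure M K1))
         \<le> (\<integral>\<^sup>+x. f x \<partial>PiM I (\<lambda>_. uniform_measure M K2))"
proof -
  let ?N = "uniform_measure M K2" and ?E = "Pi\<^sub>E I (\<lambda>_. K1)"
  have "emeasure M K1 \<le> emeasure M K2" using K by (intro emeasure_mono) auto
  then have "emeasure M K2 \<noteq> 0" using pos by auto
  then interpret N: prob_space ?N
    using K fin by (intro prob_space_uniform_measure) auto
  interpret P: product_prob_space "\<lambda>_. ?N"
    by (simp add: product_prob_space_def product_prob_space_axioms_def product_sigma_finite_def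
        N.prob_space_axioms prob_space_imp_sigma_finite)
  have NK1: "emeasure ?N K1 = emeasure M K1 / emeasure M K2"
    using K by (simp add: Int_absorb1)
  have E: "?E \<in> sets (PiM I (\<lambda>_. ?N))" using I K by (simp add: sets_PiM_I_finite)
  have PE: "emeasure (PiM I (\<lambda>_. ?N)) ?E = (emeasure M K1 / emeasure M K2) ^ card I"
    using I K by (simp add: P.emeasure_PiM NK1 prod_constant)
  have "emeasure ?N K1 \<noteq> 0" using NK1 pos fin by simp
  then have "uniform_measure (PiM I (\<lambda>_. ?N)) ?E = PiM I (\<lambda>_. uniform_measure ?N K1)"
    using K by (intro uniform_measure_PiM_PiE[OF I]) (simp_all add: N.prob_space_axioms)
  also have "\<dots> = PiM I (\<lambda>_. uniform_measure M K1)"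
    using K pos fin by (simp add: uniform_measure_uniform_measure)
  finally have cond: "uniform_measure (PiM I (\<lambda>_. ?N)) ?E = PiM I (\<lambda>_. uniform_measure M K1)" .
  have "f \<in> borel_measurable (PiM I (\<lambda>_. ?N))"
    using f measurable_cong_sets[OF sets_PiM_cong[OF refl sets_uniform_measure] refl] by simp
  from nn_integral_uniform_measure_le[OF this E P.emeasure_finite[folded infinity_ennreal_def]]
  show ?thesis unfolding PE cond .
qed

lemma set_estimators_sets_lborel:
  assumes "G \<in> set_estimators n" and "x \<in> space (PiM {..<n} (\<lambda>_. lborel))"
  shows "G x \<in> sets lborel"
proof -
  let ?M = "PiM {..<n} (\<lambda>_. lborel :: (real^'d) measure)"
  let ?S = "{p. snd p \<in> G (fst p)} \<inter> space (?M \<Otimes>\<^sub>M lborel)"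
  have "Pair x -` ?S = G x" using assms(2) by (auto simp: space_pair_measure)
  with sets_Pair1[of ?S ?M lborel x] assms(1) show ?thesis by (simp add: set_estimators_def)
qed

lemma borel_measurable_emeasure_sym_diff:
  assumes G: "G \<in> set_estimators n" and K: "K \<in> sets lborel"
  shows "(\<lambda>x. emeasure lborel (sym_diff K (G x)))
           \<in> borel_measurable (PiM {..<n} (\<lambda>_. lborel))"
proof -
  let ?M = "PiM {..<n} (\<lambda>_. lborel :: (real^'d) measure)"
  let ?S = "{p. snd p \<in> G (fst p)} \<inter> space (?M \<Otimes>\<^sub>M lborel)"
  define Q where "Q = (?S - space ?M \<times> K) \<union> (space ?M \<times> K - ?S)"
  have "?S \<in> sets (?M \<Otimes>\<^sub>M lborel)" using G by (simp add: set_estimators_def)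
  then have Q: "Q \<in> sets (?M \<Otimes>\<^sub>M lborel)"
    unfolding Q_def using K by (intro sets.Un sets.Diff pair_measureI) auto
  have "emeasure lborel (Pair x -` Q) = emeasure lborel (sym_diff K (G x))" if "x \<in> space ?M" for x
    using that by (intro arg_cong[where f="emeasure lborel"]) (auto simp: Q_def space_pair_measure)
  with lborel.measurable_emeasure_Pair[OF Q] show ?thesis by (simp cong: measurable_cong)
qed

lemma risk_nested_lower_bound:
  fixes K1 K2 :: "(real^'d) set"
  assumes G: "G \<in> set_estimators n" and K: "K1 \<subseteq> K2" "K1 \<in> sets lborel" "K2 \<in> sets lborel"
    and pos: "emeasure lborel K1 \<noteq> 0" and fin: "emeasure lborel K2 \<noteq> \<infinity>"
  defines "c \<equiv> (emeasure lborel K1 / emeasure lborel K2) ^ n"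
  shows "c * emeasure lborel (K2 - K1) \<le> c * risk n K1 G + risk n K2 G"
proof -
  define loss where "loss K x = emeasure lborel (sym_diff K (G x))" for K x
  have sets_sample_law: "sets (sample_law n K) = sets (PiM {..<n} (\<lambda>_. lborel))"
    for K :: "(real^'d) set"
    unfolding sample_law_def by (rule sets_PiM_cong) simp_all
  have loss_measurable: "loss K \<in> borel_measurable (sample_law n K')" if "K \<in> sets lborel" for K K'
    unfolding loss_def measurable_cong_sets[OF sets_sample_law refl]
    by (rule borel_measurable_emeasure_sym_diff[OF G that])
  have risk_loss: "risk n K G = (\<integral>\<^sup>+x. loss K x \<partial>sample_law n K)" for K
    unfolding risk_def loss_def ..
  have "emeasure lborel K1 \<le> emeasure lborel K2" using K by (intro emeasure_mono) auto
  then interpret P1: prob_space "sample_law n K1"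
    unfolding sample_law_def using K pos fin
    by (intro prob_space_PiM prob_space_uniform_measure) (auto simp: top.not_eq_extremum)
  have triangle: "emeasure lborel (K2 - K1) \<le> loss K1 x + loss K2 x"
    if "x \<in> space (sample_law n K1)" for x
  proof -
    have "G x \<in> sets lborel"
      using set_estimators_sets_lborel[OF G] that by (simp add: sample_law_def space_PiM)
    then have "emeasure lborel (K2 - K1) \<le> emeasure lborel (sym_diff K1 (G x) \<union> sym_diff K2 (G x))"
      using K by (intro emeasure_mono) auto
    also have "\<dots> \<le> loss K1 x + loss K2 x"
      unfolding loss_def using \<open>G x \<in> sets lborel\<close> K by (intro emeasure_subadditive) auto
    finally show ?thesis .
  qed
  have "emeasure lborel (K2 - K1) = (\<integral>\<^sup>+x. emeasure lborel (K2 - K1) \<partial>sample_law n K1)"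
    by (simp add: P1.emeasure_space_1)
  also have "\<dots> \<le> (\<integral>\<^sup>+x. loss K1 x + loss K2 x \<partial>sample_law n K1)"
    by (intro nn_integral_mono triangle)
  also have "\<dots> = risk n K1 G + (\<integral>\<^sup>+x. loss K2 x \<partial>sample_law n K1)"
    unfolding risk_loss using K by (intro nn_integral_add loss_measurable)
  finally have "c * emeasure lborel (K2 - K1)
      \<le> c * risk n K1 G + c * (\<integral>\<^sup>+x. loss K2 x \<partial>sample_law n K1)"
    by (metis distrib_left mult_left_mono zero_le)
  also have "c * (\<integral>\<^sup>+x. loss K2 x \<partial>sample_law n K1) \<le> risk n K2 G"
    using nn_integral_PiM_uniform_measure_subset[OF finite_lessThan K pos fin
        borel_measurable_emeasure_sym_diff[OF G K(3)]]
    unfolding risk_loss c_def sample_law_def loss_def by simp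
  finally show ?thesis by (simp add: add_left_mono)
qed

lemma emeasure_lborel_cube:
  assumes "0 \<le> t"
  shows "emeasure lborel (cbox (0::'a::euclidean_space) (t *\<^sub>R One)) = ennreal (t ^ DIM('a))"
  using assms by (simp add: emeasure_lborel_cbox_eq inner_sum_left inner_Basis prod_constant)

lemma cube_mono:
  assumes "s \<le> t"
  shows "cbox (0::'a::euclidean_space) (s *\<^sub>R One) \<subseteq> cbox 0 (t *\<^sub>R One)"
  using assms by (fastforce simp: mem_box inner_sum_left inner_Basis)

lemma cube_in_convex_bodies:
  assumes "0 < t"
  shows "cbox 0 (t *\<^sub>R One) \<in> convex_bodies"
  using assms by (simp add: convex_bodies_def emeasure_lborel_cube)

lemma SUP_risk_ge_cube_volume:
  fixes G :: "(nat \<Rightarrow> real^'d) \<Rightarrow> (real^'d) set"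
  assumes G: "G \<in> set_estimators n" and t: "0 < t"
  defines "c \<equiv> (1/2::real) ^ (CARD('d) * n)"
  shows "ennreal (c * t ^ CARD('d)) \<le> ennreal (c + 1) * (SUP K\<in>convex_bodies. risk n K G)"
proof -
  let ?D = "CARD('d)" and ?S = "SUP K\<in>convex_bodies. risk n K G"
  define K1 K2 where "K1 = cbox (0::real^'d) (t *\<^sub>R One)"
    and "K2 = cbox (0::real^'d) ((2*t) *\<^sub>R One)"
  have K: "K1 \<subseteq> K2" "K1 \<in> sets lborel" "K2 \<in> sets lborel"
    unfolding K1_def K2_def using t by (simp_all add: cube_mono)
  have m1: "emeasure lborel K1 = ennreal (t ^ ?D)"
    and m2: "emeasure lborel K2 = ennreal ((2*t) ^ ?D)"
    unfolding K1_def K2_def using t by (simp_all add: emeasure_lborel_cube)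
  have ratio: "(emeasure lborel K1 / emeasure lborel K2) ^ n = ennreal c"
    using t by (simp add: m1 m2 divide_ennreal ennreal_power power_mult power_divide c_def)
  have "t ^ ?D \<le> (2*t) ^ ?D - t ^ ?D"
  proof -
    have "(2::real) \<le> 2 ^ ?D" using self_le_power[of "2::real" ?D] by simp
    then have "2 * t ^ ?D \<le> 2 ^ ?D * t ^ ?D" using t by (intro mult_right_mono) simp_all
    then show ?thesis by (simp add: power_mult_distrib)
  qed
  also have "ennreal ((2*t) ^ ?D - t ^ ?D) = emeasure lborel (K2 - K1)"
    using K t by (simp add: emeasure_Diff m1 m2 ennreal_minus)
  finally have "ennreal c * ennreal (t ^ ?D) \<le> ennreal c * emeasure lborel (K2 - K1)"
    by (intro mult_left_mono) (simp_all add: ennreal_leI)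
  also have "\<dots> \<le> ennreal c * risk n K1 G + risk n K2 G"
    using risk_nested_lower_bound[OF G K] m1 m2 t unfolding ratio by simp
  also have "\<dots> \<le> ennreal c * ?S + ?S"
    using t unfolding K1_def K2_def
    by (intro add_mono mult_left_mono SUP_upper cube_in_convex_bodies) simp_all
  also have "\<dots> = ennreal (c + 1) * ?S"
    by (simp add: c_def ennreal_plus distrib_right)
  finally show ?thesis
    using t by (simp add: ennreal_mult c_def)
qed

theorem theorem3:
  fixes n :: nat
  assumes "CARD('d::finite) \<ge> 2" and "n \<ge> 1"
  shows "(INF G \<in> set_estimators n. SUP K \<in> (convex_bodies :: (real^'d) set set). risk n K G) = \<infinity>"
proof -
  have "(SUP K \<in> (convex_bodies :: (real^'d) set set). risk n K G) = \<infinity>"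
    if G: "G \<in> set_estimators n" for G
  proof -
    define c :: real where "c = (1/2) ^ (CARD('d) * n)"
    have "ennreal (c + 1) * (SUP K \<in> (convex_bodies :: (real^'d) set set). risk n K G) = \<infinity>"
      using SUP_risk_ge_cube_volume[OF G] unfolding c_def[symmetric]
      by (intro ennreal_eq_top_if_dominates_powers[of c "CARD('d)"]) (simp_all add: c_def)
    then show ?thesis by (simp add: ennreal_mult_eq_top_iff)
  qed
  then show ?thesis by (simp add: INF_top_conv)
qed
end
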